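(* Let $\mathbb D$ be any nonempty set of database instances over the same schema. Then there exists a probabilistic database $\mathcal D\in\mathsf{FO}(\mathsf{TI})$ with $\mathrm{worlds}(\mathcal D)=\mathbb D$.
   Context: Fix a countably infinite universe $U$. A database schema is a finite nonempty set of relation symbols with arities; facts are $R(u_1,\dots,u_{\mathrm{ar}(R)})$ with $u_i\in U$; an instance is a finite set of facts; $\mathrm{adom}(D)$ is the set of elements of $U$ occurring in $D$. A probabilistic database (PDB) is a discrete probability space $(\mathbb D,P)$ with $\mathbb D$ a nonempty countable set of instances; $\mathrm{worlds}(\mathcal D)$ is the set of instances $D$ with $P(\{D\})>0$. A PDB $\mathcal I$ is tuple-independent if for all pairwise distinct facts $f_1,\dots,f_k$, $\Pr(f_1\in I,\dots,f_k\in I)=\prod_i\Pr(f_i\in I)$. An FO-view consists of one first-order formula $\Phi_R(x_1,\dots,x_{\mathrm{ar}(R)})$ per output relation symbol $R$, evaluated under active domain semantics (quantifiers range over $\mathrm{adom}(D)$ and the formula's constants), mapping $D$ to the instance containing $R(\bar a)$ for all $\bar a$ over $\mathrm{adom}(D)\cup\mathrm{adom}(\Phi_R)$ with $D\models\Phi_R[\bar a]$. The image of a PDB $(\mathbb D,P)$ under a view $V$ is the PDB on $V(\mathbb D)$ with $P'(\{D'\})=P(\{D:V(D)=D'\})$. $\mathsf{FO}(\mathsf{TI})$ is the class of images of tuple-independent PDBs under FO-views. *)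

theory Defs
  imports "HOL-Probability.Probability"
begin

text \<open>Universe U: the countably infinite type nat.
  A fact R(u_1,...,u_k) is the pair (R, [u_1,...,u_k]).\<close>

type_synonym fact = "nat \<times> nat list"

definition schema :: "nat set \<Rightarrow> bool" where
  "schema S \<longleftrightarrow> finite S \<and> S \<noteq> {}"

definition fact_over :: "nat set \<Rightarrow> (nat \<Rightarrow> nat) \<Rightarrow> fact \<Rightarrow> bool" where
  "fact_over S ar f \<longleftrightarrow> fst f \<in> S \<and> length (snd f) = ar (fst f)"

definition is_instance :: "nat set \<Rightarrow> (nat \<Rightarrow> nat) \<Rightarrow> fact set \<Rightarrow> bool" where
  "is_instance S ar D \<longleftrightarrow> finite D \<and> (\<forall>f\<in>D. fact_over S ar f)"

definition adom :: "fact set \<Rightarrow> nat set" where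
  "adom D = (\<Union>f\<in>D. set (snd f))"

definition PDB :: "nat set \<Rightarrow> (nat \<Rightarrow> nat) \<Rightarrow> fact set pmf \<Rightarrow> bool" where
  "PDB S ar P \<longleftrightarrow> (\<forall>D\<in>set_pmf P. is_instance S ar D)"

definition worlds :: "fact set pmf \<Rightarrow> fact set set" where
  "worlds P = set_pmf P"

definition tuple_independent :: "fact set pmf \<Rightarrow> bool" where
  "tuple_independent P \<longleftrightarrow>
     (\<forall>fs :: fact list. distinct fs \<longrightarrow>
        measure_pmf.prob P {I. \<forall>f\<in>set fs. f \<in> I} = (\<Prod>f\<leftarrow>fs. measure_pmf.prob P {I. f \<in> I}))"

definition TI_PDB :: "nat set \<Rightarrow> (nat \<Rightarrow> nat) \<Rightarrow> fact set pmf \<Rightarrow> bool" where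
  "TI_PDB S ar P \<longleftrightarrow> PDB S ar P \<and> tuple_independent P"

datatype fo_term = Var nat | Const nat

datatype fo = Atom nat "fo_term list" | Eq fo_term fo_term | TT | FF
  | Neg fo | Conj fo fo | Disj fo fo | Ex nat fo | All nat fo

fun term_val :: "(nat \<Rightarrow> nat) \<Rightarrow> fo_term \<Rightarrow> nat" where
  "term_val v (Var x) = v x"
| "term_val v (Const c) = c"

fun term_vars :: "fo_term \<Rightarrow> nat set" where
  "term_vars (Var x) = {x}"
| "term_vars (Const c) = {}"

fun term_consts :: "fo_term \<Rightarrow> nat set" where
  "term_consts (Var x) = {}"
| "term_consts (Const c) = {c}"

fun fv :: "fo \<Rightarrow> nat set" where
  "fv (Atom R ts) = (\<Union>t\<in>set ts. term_vars t)"
| "fv (Eq s t) = term_vars s \<union> term_vars t"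
| "fv TT = {}"
| "fv FF = {}"
| "fv (Neg \<phi>) = fv \<phi>"
| "fv (Conj \<phi> \<psi>) = fv \<phi> \<union> fv \<psi>"
| "fv (Disj \<phi> \<psi>) = fv \<phi> \<union> fv \<psi>"
| "fv (Ex x \<phi>) = fv \<phi> - {x}"
| "fv (All x \<phi>) = fv \<phi> - {x}"

text \<open>adom of a formula: the constants occurring in it.\<close>
fun fo_consts :: "fo \<Rightarrow> nat set" where
  "fo_consts (Atom R ts) = (\<Union>t\<in>set ts. term_consts t)"
| "fo_consts (Eq s t) = term_consts s \<union> term_consts t"
| "fo_consts TT = {}"
| "fo_consts FF = {}"
| "fo_consts (Neg \<phi>) = fo_consts \<phi>"
| "fo_consts (Conj \<phi> \<psi>) = fo_consts \<phi> \<union> fo_consts \<psi>"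
| "fo_consts (Disj \<phi> \<psi>) = fo_consts \<phi> \<union> fo_consts \<psi>"
| "fo_consts (Ex x \<phi>) = fo_consts \<phi>"
| "fo_consts (All x \<phi>) = fo_consts \<phi>"

fun fo_over :: "nat set \<Rightarrow> (nat \<Rightarrow> nat) \<Rightarrow> fo \<Rightarrow> bool" where
  "fo_over S ar (Atom R ts) \<longleftrightarrow> R \<in> S \<and> length ts = ar R"
| "fo_over S ar (Eq s t) \<longleftrightarrow> True"
| "fo_over S ar TT \<longleftrightarrow> True"
| "fo_over S ar FF \<longleftrightarrow> True"
| "fo_over S ar (Neg \<phi>) \<longleftrightarrow> fo_over S ar \<phi>"
| "fo_over S ar (Conj \<phi> \<psi>) \<longleftrightarrow> fo_over S ar \<phi> \<and> fo_over S ar \<psi>"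
| "fo_over S ar (Disj \<phi> \<psi>) \<longleftrightarrow> fo_over S ar \<phi> \<and> fo_over S ar \<psi>"
| "fo_over S ar (Ex x \<phi>) \<longleftrightarrow> fo_over S ar \<phi>"
| "fo_over S ar (All x \<phi>) \<longleftrightarrow> fo_over S ar \<phi>"

fun sat :: "nat set \<Rightarrow> fact set \<Rightarrow> (nat \<Rightarrow> nat) \<Rightarrow> fo \<Rightarrow> bool" where
  "sat A D v (Atom R ts) \<longleftrightarrow> (R, map (term_val v) ts) \<in> D"
| "sat A D v (Eq s t) \<longleftrightarrow> term_val v s = term_val v t"
| "sat A D v TT \<longleftrightarrow> True"
| "sat A D v FF \<longleftrightarrow> False"
| "sat A D v (Neg \<phi>) \<longleftrightarrow> \<not> sat A D v \<phi>"
| "sat A D v (Conj \<phi> \<psi>) \<longleftrightarrow> sat A D v \<phi> \<and> sat A D v \<psi>"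
| "sat A D v (Disj \<phi> \<psi>) \<longleftrightarrow> sat A D v \<phi> \<or> sat A D v \<psi>"
| "sat A D v (Ex x \<phi>) \<longleftrightarrow> (\<exists>a\<in>A. sat A D (v(x := a)) \<phi>)"
| "sat A D v (All x \<phi>) \<longleftrightarrow> (\<forall>a\<in>A. sat A D (v(x := a)) \<phi>)"

text \<open>Assignment of a tuple to the free variables x_1,...,x_k, represented by the
  variables 0,...,k-1.\<close>
definition tuple_assign :: "nat list \<Rightarrow> nat \<Rightarrow> nat" where
  "tuple_assign as i = (if i < length as then as ! i else 0)"

definition adom_sat :: "fact set \<Rightarrow> fo \<Rightarrow> nat list \<Rightarrow> bool" where
  "adom_sat D \<phi> as \<longleftrightarrow> sat (adom D \<union> fo_consts \<phi>) D (tuple_assign as) \<phi>"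

text \<open>An FO-view from schema (Sin, arin) to schema (S, ar): one formula Phi_R per output
  symbol R, over the input schema, with free variables among x_1..x_ar(R) (i.e. 0..ar R - 1).\<close>
definition fo_view :: "nat set \<Rightarrow> (nat \<Rightarrow> nat) \<Rightarrow> nat set \<Rightarrow> (nat \<Rightarrow> nat) \<Rightarrow> (nat \<Rightarrow> fo) \<Rightarrow> bool" where
  "fo_view Sin arin S ar \<Phi> \<longleftrightarrow>
     (\<forall>R\<in>S. fo_over Sin arin (\<Phi> R) \<and> fv (\<Phi> R) \<subseteq> {..<ar R})"

definition apply_view :: "nat set \<Rightarrow> (nat \<Rightarrow> nat) \<Rightarrow> (nat \<Rightarrow> fo) \<Rightarrow> fact set \<Rightarrow> fact set" where
  "apply_view S ar \<Phi> D =
     {(R, as) | R as. R \<in> S \<and> length as = ar R \<and>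
        set as \<subseteq> adom D \<union> fo_consts (\<Phi> R) \<and> adom_sat D (\<Phi> R) as}"

definition in_FO_TI :: "nat set \<Rightarrow> (nat \<Rightarrow> nat) \<Rightarrow> fact set pmf \<Rightarrow> bool" where
  "in_FO_TI S ar \<D> \<longleftrightarrow>
     (\<exists>Sin arin I \<Phi>. schema Sin \<and> TI_PDB Sin arin I \<and> fo_view Sin arin S ar \<Phi> \<and>
        \<D> = map_pmf (apply_view S ar \<Phi>) I)"

end

theory Submission
  imports Defs "HOL-Library.Nat_Bijection"
begin

(*
  Enumerate the worlds as D_0, D_1, ... and encode D_i, listed as f_0, ..., f_(m-1), by a chain
  of facts over a three-relation schema: a start mark on node (i, 0), an end mark on node (i, m),
  and for k < m a link from node (i, k) to node (i, k + 1) carrying f_k.  There is a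
  tuple-independent PDB whose worlds are all finite sets of chain facts, because the binary digits
  of a geometrically distributed number are independent.  A first-order sentence checks that a
  world has exactly one start mark and that every node it mentions has a start mark or an
  incoming link, and an end mark or an outgoing link; following the links from the start shows
  that among sets of chain facts exactly the complete chains pass this test.  The view decodes
  the complete chain i to D_i and maps every other world to D_0.
*)

section \<open>Tuple-independent random finite subsets\<close>

lemma geometric_pmf_parity_split:
  fixes x :: real
  assumes "0 < x" "x < 1"
  shows "map_pmf (\<lambda>n. (odd n, n div 2)) (geometric_pmf (1 - x)) =
         pair_pmf (bernoulli_pmf (x / (1 + x))) (geometric_pmf (1 - x\<^sup>2))"
proof (rule pmf_eqI)
  fix bm :: "bool \<times> nat"
  obtain b m where bm: "bm = (b, m)" by (cases bm)
  have inj: "inj (\<lambda>n::nat. (odd n, n div 2))"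
    by (rule injI) (metis div_mult_mod_eq odd_iff_mod_2_eq_one even_iff_mod_2_eq_zero prod.inject)
  have "bm = (\<lambda>n. (odd n, n div 2)) (2 * m + of_bool b)"
    unfolding bm by auto
  then have "pmf (map_pmf (\<lambda>n. (odd n, n div 2)) (geometric_pmf (1 - x))) bm =
      pmf (geometric_pmf (1 - x)) (2 * m + of_bool b)"
    by (simp only: pmf_map_inj'[OF inj])
  also have "\<dots> = x ^ (2 * m + of_bool b) * (1 - x)"
    using assms by simp
  also have "\<dots> = pmf (bernoulli_pmf (x / (1 + x))) b * ((x\<^sup>2) ^ m * (1 - x\<^sup>2))"
    using assms by (cases b) (simp_all add: power_mult field_simps power2_eq_square)
  also have "\<dots> = pmf (pair_pmf (bernoulli_pmf (x / (1 + x))) (geometric_pmf (1 - x\<^sup>2))) bm"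
    using assms by (simp add: bm pmf_pair power_less_one_iff)
  finally show "pmf (map_pmf (\<lambda>n. (odd n, n div 2)) (geometric_pmf (1 - x))) bm = \<dots>" .
qed

lemma subset_set_decode_iff:
  "K \<subseteq> set_decode n \<longleftrightarrow> (0 \<in> K \<longrightarrow> odd n) \<and> Suc -` K \<subseteq> set_decode (n div 2)"
proof -
  have "k \<in> set_decode n \<longleftrightarrow> (k = 0 \<longrightarrow> odd n) \<and> (\<forall>j. k = Suc j \<longrightarrow> j \<in> set_decode (n div 2))" for k
    by (cases k) auto
  then show ?thesis
    by blast
qed

lemma prod_split_0_Suc:
  assumes "finite K"
  shows "(\<Prod>k\<in>K. f k) = (if 0 \<in> K then f 0 else 1) * (\<Prod>k\<in>Suc -` K. f (Suc k))"
proof -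
  have K: "K = (K \<inter> {0}) \<union> Suc ` (Suc -` K)"
    by (auto simp: image_iff) (metis not0_implies_Suc)
  have "(\<Prod>k\<in>K. f k) = (\<Prod>k\<in>K \<inter> {0}. f k) * (\<Prod>k\<in>Suc ` (Suc -` K). f k)"
    using assms by (subst K, subst prod.union_disjoint) auto
  also have "(\<Prod>k\<in>Suc ` (Suc -` K). f k) = (\<Prod>k\<in>Suc -` K. f (Suc k))"
    by (rule prod.reindex_cong[of Suc]) auto
  finally show ?thesis
    by (simp add: Int_insert_right)
qed

lemma prob_subset_set_decode_geometric_step:
  fixes x :: real
  assumes "0 < x" "x < 1"
  shows "measure_pmf.prob (geometric_pmf (1 - x)) {n. K \<subseteq> set_decode n} =
    (if 0 \<in> K then x / (1 + x) else 1) *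
    measure_pmf.prob (geometric_pmf (1 - x\<^sup>2)) {m. Suc -` K \<subseteq> set_decode m}"
proof -
  have "{n. K \<subseteq> set_decode n} =
      (\<lambda>n. (odd n, n div 2)) -` ({b. 0 \<in> K \<longrightarrow> b} \<times> {m. Suc -` K \<subseteq> set_decode m})"
    by (auto simp: subset_set_decode_iff[of K])
  then have "measure_pmf.prob (geometric_pmf (1 - x)) {n. K \<subseteq> set_decode n} =
      measure_pmf.prob (map_pmf (\<lambda>n. (odd n, n div 2)) (geometric_pmf (1 - x)))
        ({b. 0 \<in> K \<longrightarrow> b} \<times> {m. Suc -` K \<subseteq> set_decode m})"
    by simp
  also have "\<dots> = measure_pmf.prob (bernoulli_pmf (x / (1 + x))) {b. 0 \<in> K \<longrightarrow> b} *
      measure_pmf.prob (geometric_pmf (1 - x\<^sup>2)) {m. Suc -` K \<subseteq> set_decode m}"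
    unfolding geometric_pmf_parity_split[OF assms]
    by (rule measure_pmf_prob_product) (simp_all add: countableI_type)
  also have "{b. 0 \<in> K \<longrightarrow> b} = (if 0 \<in> K then {True} else UNIV)"
    by auto
  finally show ?thesis
    using assms by (simp add: measure_pmf_single)
qed

lemma prob_subset_set_decode_geometric:
  fixes x :: real
  assumes "0 < x" "x < 1" "finite K"
  shows "measure_pmf.prob (geometric_pmf (1 - x)) {n. K \<subseteq> set_decode n} =
         (\<Prod>k\<in>K. x ^ 2 ^ k / (1 + x ^ 2 ^ k))"
proof -
  obtain N where "K \<subseteq> {..<N}"
    using assms(3) finite_nat_iff_bounded by auto
  then show ?thesis
    using assms(1,2)
  proof (induction N arbitrary: K x)
    case 0
    then show ?case
      by simp
  next
    case (Suc N)
    have "0 < x\<^sup>2" "x\<^sup>2 < 1"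
      using Suc.prems by (auto simp: power_less_one_iff)
    moreover have "Suc -` K \<subseteq> {..<N}"
      using Suc.prems(1) by auto
    ultimately have "measure_pmf.prob (geometric_pmf (1 - x\<^sup>2)) {m. Suc -` K \<subseteq> set_decode m} =
        (\<Prod>k\<in>Suc -` K. x ^ 2 ^ Suc k / (1 + x ^ 2 ^ Suc k))"
      using Suc.IH by (simp add: power_mult[symmetric] mult.commute)
    then show ?case
      using Suc.prems finite_subset[OF Suc.prems(1)]
      by (simp add: prob_subset_set_decode_geometric_step prod_split_0_Suc[of K])
  qed
qed

definition random_finite_subset :: "(nat \<Rightarrow> 'a) \<Rightarrow> 'a set pmf" where
  "random_finite_subset enc = map_pmf (\<lambda>n. enc ` set_decode n) (geometric_pmf (1/2))"

(* The binary digit k of a Geometric(1/2) number is 1 with probability (1/2)^2^k / (1 + (1/2)^2^k). *)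
definition inclusion_prob :: "(nat \<Rightarrow> 'a) \<Rightarrow> 'a \<Rightarrow> real" where
  "inclusion_prob enc f =
     (if f \<in> range enc then (1/2) ^ 2 ^ inv enc f / (1 + (1/2) ^ 2 ^ inv enc f) else 0)"

lemma set_pmf_random_finite_subset:
  assumes "inj enc"
  shows "set_pmf (random_finite_subset enc) = {W. W \<subseteq> range enc \<and> finite W}"
proof -
  have "range set_decode = Collect finite"
    by (auto simp: image_iff) (metis set_encode_inverse)
  then have "set_pmf (random_finite_subset enc) = (\<lambda>B. enc ` B) ` Collect finite"
    unfolding random_finite_subset_def by (simp add: set_pmf_geometric image_image[symmetric])
  also have "\<dots> = {W. W \<subseteq> range enc \<and> finite W}"
  proof (intro equalityI subsetI)
    fix W
    assume "W \<in> {W. W \<subseteq> range enc \<and> finite W}"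
    then have "W = enc ` (enc -` W)" "finite (enc -` W)"
      using assms by (auto simp: finite_vimageI)
    then show "W \<in> (\<lambda>B. enc ` B) ` Collect finite"
      by blast
  qed auto
  finally show ?thesis .
qed

lemma prob_superset_random_finite_subset:
  assumes "inj enc" "finite B"
  shows "measure_pmf.prob (random_finite_subset enc) {W. B \<subseteq> W} = (\<Prod>f\<in>B. inclusion_prob enc f)"
proof (cases "B \<subseteq> range enc")
  case True
  define K where "K = enc -` B"
  have B: "B = enc ` K"
    using True by (auto simp: K_def)
  have "finite K"
    using assms by (simp add: K_def finite_vimageI)
  have "measure_pmf.prob (random_finite_subset enc) {W. B \<subseteq> W} =
      measure_pmf.prob (geometric_pmf (1 - 1/2)) {n. K \<subseteq> set_decode n}"
    unfolding random_finite_subset_def B by (simp add: inj_image_subset_iff[OF assms(1)])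
  also have "\<dots> = (\<Prod>k\<in>K. inclusion_prob enc (enc k))"
    using prob_subset_set_decode_geometric[of "1/2", OF _ _ \<open>finite K\<close>] assms(1)
    by (simp add: inclusion_prob_def)
  also have "\<dots> = (\<Prod>f\<in>B. inclusion_prob enc f)"
    unfolding B by (simp add: prod.reindex inj_on_subset[OF assms(1) subset_UNIV])
  finally show ?thesis .
next
  case False
  then obtain f where f: "f \<in> B" "f \<notin> range enc"
    by blast
  then have "{n. B \<subseteq> enc ` set_decode n} = {}"
    by auto
  then show ?thesis
    using assms(2) f unfolding random_finite_subset_def
    by (auto simp: inclusion_prob_def prod_zero_iff)
qed

lemma tuple_independent_random_finite_subset:
  assumes "inj enc"
  shows "tuple_independent (random_finite_subset enc)"
  unfolding tuple_independent_def
proof (intro allI impI)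
  fix fs :: "fact list"
  assume "distinct fs"
  let ?P = "measure_pmf.prob (random_finite_subset enc)"
  have "{I. \<forall>f\<in>set fs. f \<in> I} = {I. set fs \<subseteq> I}"
    by blast
  then have "?P {I. \<forall>f\<in>set fs. f \<in> I} = (\<Prod>f\<in>set fs. inclusion_prob enc f)"
    using prob_superset_random_finite_subset[OF assms, of "set fs"] by simp
  also have "\<dots> = (\<Prod>f\<leftarrow>fs. inclusion_prob enc f)"
    using \<open>distinct fs\<close> by (rule prod.distinct_set_conv_list)
  also have "\<dots> = (\<Prod>f\<leftarrow>fs. ?P {I. f \<in> I})"
    using prob_superset_random_finite_subset[OF assms, of "{_}"] by simp
  finally show "?P {I. \<forall>f\<in>set fs. f \<in> I} = (\<Prod>f\<leftarrow>fs. ?P {I. f \<in> I})" .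
qed

lemma ex_tuple_independent_finite_subsets:
  assumes "countable F" "infinite F"
  shows "\<exists>P. tuple_independent P \<and> set_pmf P = {W. W \<subseteq> F \<and> finite W}"
proof -
  have "bij_betw (from_nat_into F) UNIV F"
    using assms by (rule bij_betw_from_nat_into)
  then show ?thesis
    using tuple_independent_random_finite_subset set_pmf_random_finite_subset
    by (metis bij_betw_def)
qed

section \<open>Chain encodings of instances\<close>

definition chain_node :: "nat \<Rightarrow> nat \<Rightarrow> nat" where
  "chain_node i k = prod_encode (i, k)"

lemma chain_node_eq_iff [simp]: "chain_node i k = chain_node j l \<longleftrightarrow> i = j \<and> k = l"
  unfolding chain_node_def by (simp add: prod_encode_eq)

definition padded_fact :: "nat \<Rightarrow> fact \<Rightarrow> nat list" where
  "padded_fact A f = fst f # snd f @ replicate (A - length (snd f)) 0"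

lemma length_padded_fact: "length (snd f) \<le> A \<Longrightarrow> length (padded_fact A f) = Suc A"
  by (simp add: padded_fact_def)

lemma padded_fact_eq_iff:
  assumes "fact_over S ar f" "fact_over S ar g"
  shows "padded_fact A f = padded_fact A g \<longleftrightarrow> f = g"
  using assms by (cases f, cases g) (auto simp: padded_fact_def fact_over_def)

(*
  Symbol 0 marks the first node of a chain and symbol 1 its last node; a fact of symbol 2 is a
  link (u, w, R, b_1, ..., b_A) from node u to node w carrying the fact R(b_1, ...), padded with
  zeros to width A.
*)
definition chain_link :: "nat \<Rightarrow> nat \<Rightarrow> fact list \<Rightarrow> nat \<Rightarrow> fact" where
  "chain_link A i fs k = (2, chain_node i k # chain_node i (Suc k) # padded_fact A (fs ! k))"

definition chain_facts :: "nat \<Rightarrow> nat \<Rightarrow> fact list \<Rightarrow> fact set" where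
  "chain_facts A i fs = {(0, [chain_node i 0]), (1, [chain_node i (length fs)])} \<union>
     chain_link A i fs ` {..<length fs}"

definition encoding_facts :: "nat \<Rightarrow> (nat \<Rightarrow> fact list) \<Rightarrow> fact set" where
  "encoding_facts A xs = (\<Union>i. chain_facts A i (xs i))"

definition encoding_arity :: "nat \<Rightarrow> nat \<Rightarrow> nat" where
  "encoding_arity A r = (if r = 2 then A + 3 else 1)"

lemma start_mem_chain_facts [simp]: "(0, [y]) \<in> chain_facts A i fs \<longleftrightarrow> y = chain_node i 0"
  by (auto simp: chain_facts_def chain_link_def)

(* Stated for the symbol 1, which the simplifier rewrites to Suc 0; hence [simplified]. *)
lemma end_mem_chain_facts [simplified, simp]: "(1, [y]) \<in> chain_facts A i fs \<longleftrightarrow> y = chain_node i (length fs)"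
  by (auto simp: chain_facts_def chain_link_def)

lemma link_mem_chain_facts:
  "(2, u # y # p) \<in> chain_facts A i fs \<longleftrightarrow>
     (\<exists>k<length fs. u = chain_node i k \<and> y = chain_node i (Suc k) \<and> p = padded_fact A (fs ! k))"
  by (auto simp: chain_facts_def chain_link_def)

lemma mem_chain_facts:
  "f \<in> chain_facts A i fs \<longleftrightarrow>
     f = (0, [chain_node i 0]) \<or> f = (1, [chain_node i (length fs)]) \<or>
     (\<exists>k<length fs. f = chain_link A i fs k)"
  by (auto simp: chain_facts_def)

lemma countable_encoding_facts: "countable (encoding_facts A xs)"
  unfolding encoding_facts_def chain_facts_def by (intro countable_UN) (auto intro: countable_finite)

lemma infinite_encoding_facts: "infinite (encoding_facts A xs)"
proof -
  have "range (\<lambda>i. (0, [chain_node i 0])) \<subseteq> encoding_facts A xs"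
    by (auto simp: encoding_facts_def)
  moreover have "inj (\<lambda>i. (0::nat, [chain_node i 0]))"
    by (rule injI) simp
  ultimately show ?thesis
    using finite_subset range_inj_infinite by blast
qed

lemma length_padded_chain_fact:
  assumes "\<forall>i. \<forall>f\<in>set (xs i). length (snd f) \<le> A" "k < length (xs j)"
  shows "length (padded_fact A (xs j ! k)) = Suc A"
  using assms nth_mem length_padded_fact by blast

lemma fact_over_encoding_facts:
  assumes "\<forall>i. \<forall>f\<in>set (xs i). length (snd f) \<le> A" "f \<in> encoding_facts A xs"
  shows "fact_over {0, 1, 2} (encoding_arity A) f"
  using assms(2) length_padded_chain_fact[OF assms(1)]
  by (auto simp: encoding_facts_def mem_chain_facts chain_link_def fact_over_def encoding_arity_def)

definition decoded_facts :: "nat set \<Rightarrow> (nat \<Rightarrow> nat) \<Rightarrow> nat \<Rightarrow> fact set \<Rightarrow> fact set" where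
  "decoded_facts S ar A W = {f. fact_over S ar f \<and> (\<exists>u w. (2, u # w # padded_fact A f) \<in> W)}"

lemma decoded_facts_chain_facts:
  assumes "\<forall>f\<in>set fs. fact_over S ar f"
  shows "decoded_facts S ar A (chain_facts A i fs) = set fs"
proof -
  have "decoded_facts S ar A (chain_facts A i fs) =
      {f. fact_over S ar f \<and> (\<exists>k<length fs. padded_fact A f = padded_fact A (fs ! k))}"
    by (auto simp: decoded_facts_def link_mem_chain_facts)
  also have "\<dots> = {f. fact_over S ar f \<and> (\<exists>k<length fs. f = fs ! k)}"
    using assms padded_fact_eq_iff[of S ar] by (metis nth_mem)
  also have "\<dots> = set fs"
    using assms by (auto simp: in_set_conv_nth) metis
  finally show ?thesis .
qed

section \<open>Recognising complete chains\<close>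

definition has_in_edge :: "nat \<Rightarrow> fact set \<Rightarrow> nat \<Rightarrow> bool" where
  "has_in_edge A W y \<longleftrightarrow> (\<exists>u p. length p = Suc A \<and> (2, u # y # p) \<in> W)"

definition has_out_edge :: "nat \<Rightarrow> fact set \<Rightarrow> nat \<Rightarrow> bool" where
  "has_out_edge A W y \<longleftrightarrow> (\<exists>w p. length p = Suc A \<and> (2, y # w # p) \<in> W)"

definition encoded_node :: "nat \<Rightarrow> fact set \<Rightarrow> nat \<Rightarrow> bool" where
  "encoded_node A W y \<longleftrightarrow> (0, [y]) \<in> W \<or> (1, [y]) \<in> W \<or> has_in_edge A W y \<or> has_out_edge A W y"

definition node_linked :: "nat \<Rightarrow> fact set \<Rightarrow> nat \<Rightarrow> bool" where
  "node_linked A W y \<longleftrightarrow>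
     ((0, [y]) \<in> W \<or> has_in_edge A W y) \<and> ((1, [y]) \<in> W \<or> has_out_edge A W y)"

definition valid_encoding :: "nat \<Rightarrow> fact set \<Rightarrow> bool" where
  "valid_encoding A W \<longleftrightarrow> (\<exists>!x. (0, [x]) \<in> W) \<and> (\<forall>y. encoded_node A W y \<longrightarrow> node_linked A W y)"

lemma encoded_node_chain_facts:
  "encoded_node A (chain_facts A i fs) y \<Longrightarrow> \<exists>k\<le>length fs. y = chain_node i k"
  unfolding encoded_node_def has_in_edge_def has_out_edge_def link_mem_chain_facts
  by (auto intro: less_imp_le Suc_leI)

lemma node_linked_chain_facts:
  assumes "\<forall>f\<in>set fs. length (snd f) \<le> A" "k \<le> length fs"
  shows "node_linked A (chain_facts A i fs) (chain_node i k)"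
proof -
  have len: "length (padded_fact A (fs ! j)) = Suc A" if "j < length fs" for j
    using assms(1) that by (simp add: length_padded_fact)
  have "(0, [chain_node i k]) \<in> chain_facts A i fs \<or> has_in_edge A (chain_facts A i fs) (chain_node i k)"
    using assms(2) len by (cases k) (auto simp: has_in_edge_def link_mem_chain_facts)
  moreover have "(1, [chain_node i k]) \<in> chain_facts A i fs \<or> has_out_edge A (chain_facts A i fs) (chain_node i k)"
    using assms(2) len by (cases "k = length fs") (auto simp: has_out_edge_def link_mem_chain_facts)
  ultimately show ?thesis
    unfolding node_linked_def by blast
qed

lemma valid_encoding_chain_facts:
  "\<forall>f\<in>set fs. length (snd f) \<le> A \<Longrightarrow> valid_encoding A (chain_facts A i fs)"
  unfolding valid_encoding_def
  by (auto dest!: encoded_node_chain_facts intro: node_linked_chain_facts)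

context
  fixes A :: nat and xs :: "nat \<Rightarrow> fact list" and W :: "fact set"
  assumes W_sub: "W \<subseteq> encoding_facts A xs"
begin

lemma start_in_encoding: "(0, [chain_node j k]) \<in> W \<Longrightarrow> k = 0"
  using W_sub by (auto simp: encoding_facts_def)

lemma end_in_encoding: "(1, [chain_node j k]) \<in> W \<Longrightarrow> k = length (xs j)"
  using W_sub by (auto simp: encoding_facts_def)

lemma link_in_encoding:
  "(2, u # y # p) \<in> W \<Longrightarrow> \<exists>i k. k < length (xs i) \<and> (2, u # y # p) = chain_link A i (xs i) k"
proof -
  assume "(2, u # y # p) \<in> W"
  then obtain i where "(2, u # y # p) \<in> chain_facts A i (xs i)"
    using W_sub by (auto simp: encoding_facts_def)
  then show ?thesis
    by (auto simp: link_mem_chain_facts chain_link_def)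
qed

lemma not_has_in_edge_chain_node_0: "\<not> has_in_edge A W (chain_node j 0)"
  unfolding has_in_edge_def using link_in_encoding by (force simp: chain_link_def)

context
  assumes narrow: "\<forall>i. \<forall>f\<in>set (xs i). length (snd f) \<le> A"
begin

lemma has_out_edge_chain_node:
  "has_out_edge A W (chain_node j k) \<longleftrightarrow> k < length (xs j) \<and> chain_link A j (xs j) k \<in> W"
proof
  assume "has_out_edge A W (chain_node j k)"
  then obtain w p where "(2, chain_node j k # w # p) \<in> W"
    unfolding has_out_edge_def by blast
  with link_in_encoding show "k < length (xs j) \<and> chain_link A j (xs j) k \<in> W"
    by (force simp: chain_link_def)
next
  assume "k < length (xs j) \<and> chain_link A j (xs j) k \<in> W"
  then show "has_out_edge A W (chain_node j k)"
    unfolding has_out_edge_def chain_link_def using length_padded_chain_fact[OF narrow] by blast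
qed

lemma has_in_edge_chain_node_Suc:
  "has_in_edge A W (chain_node j (Suc k)) \<longleftrightarrow> k < length (xs j) \<and> chain_link A j (xs j) k \<in> W"
proof
  assume "has_in_edge A W (chain_node j (Suc k))"
  then obtain u p where "(2, u # chain_node j (Suc k) # p) \<in> W"
    unfolding has_in_edge_def by blast
  with link_in_encoding show "k < length (xs j) \<and> chain_link A j (xs j) k \<in> W"
    by (force simp: chain_link_def)
next
  assume "k < length (xs j) \<and> chain_link A j (xs j) k \<in> W"
  then show "has_in_edge A W (chain_node j (Suc k))"
    unfolding has_in_edge_def chain_link_def using length_padded_chain_fact[OF narrow] by blast
qed

lemma encoded_nodes_of_chain_link:
  assumes "chain_link A j (xs j) k \<in> W" "k < length (xs j)"
  shows "encoded_node A W (chain_node j k)" "encoded_node A W (chain_node j (Suc k))"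
  using assms by (auto simp: encoded_node_def has_out_edge_chain_node has_in_edge_chain_node_Suc)

lemma encoded_node_of_chain_fact:
  assumes "f \<in> W" "f \<in> chain_facts A j (xs j)"
  shows "\<exists>k. encoded_node A W (chain_node j k)"
  using assms encoded_nodes_of_chain_link(1) unfolding mem_chain_facts
  by (auto simp: encoded_node_def)

context
  assumes linked: "\<And>y. encoded_node A W y \<Longrightarrow> node_linked A W y"
begin

lemma chain_link_after_encoded_node:
  assumes "encoded_node A W (chain_node j k)" "k < length (xs j)"
  shows "chain_link A j (xs j) k \<in> W"
  using linked[OF assms(1)] end_in_encoding[of j k] assms(2)
  by (auto simp: node_linked_def has_out_edge_chain_node)

lemma chain_link_before_encoded_node:
  "encoded_node A W (chain_node j (Suc k)) \<Longrightarrow> k < length (xs j) \<and> chain_link A j (xs j) k \<in> W"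
proof -
  assume "encoded_node A W (chain_node j (Suc k))"
  then have "(0, [chain_node j (Suc k)]) \<in> W \<or> has_in_edge A W (chain_node j (Suc k))"
    using linked unfolding node_linked_def by blast
  then show ?thesis
    using start_in_encoding[of j "Suc k"] has_in_edge_chain_node_Suc by blast
qed

lemma chain_start_of_encoded_node:
  "encoded_node A W (chain_node j k) \<Longrightarrow> (0, [chain_node j 0]) \<in> W"
proof (induction k)
  case 0
  then show ?case
    using linked[OF 0] not_has_in_edge_chain_node_0 by (auto simp: node_linked_def)
next
  case (Suc k)
  then have "chain_link A j (xs j) k \<in> W" "k < length (xs j)"
    using chain_link_before_encoded_node by blast+
  then show ?case
    using Suc.IH encoded_nodes_of_chain_link(1) by blast
qed

lemma chain_facts_subset_of_start:
  assumes start: "(0, [chain_node j 0]) \<in> W"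
  shows "chain_facts A j (xs j) \<subseteq> W"
proof -
  have nodes: "encoded_node A W (chain_node j k)" if "k \<le> length (xs j)" for k
    using that
  proof (induction k)
    case 0
    then show ?case
      using start by (simp add: encoded_node_def)
  next
    case (Suc k)
    then show ?case
      using chain_link_after_encoded_node encoded_nodes_of_chain_link(2) by simp
  qed
  have "(1, [chain_node j (length (xs j))]) \<in> W"
    using linked[OF nodes[OF order_refl]] by (auto simp: node_linked_def has_out_edge_chain_node)
  then show ?thesis
    using start nodes chain_link_after_encoded_node by (auto simp: mem_chain_facts)
qed

end

lemma valid_encoding_iff_chain_facts: "valid_encoding A W \<longleftrightarrow> (\<exists>i. W = chain_facts A i (xs i))"
proof
  assume "valid_encoding A W"
  then obtain x where x: "(0, [x]) \<in> W" and unique: "\<And>x'. (0, [x']) \<in> W \<Longrightarrow> x' = x"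
    and linked: "\<And>y. encoded_node A W y \<Longrightarrow> node_linked A W y"
    unfolding valid_encoding_def by blast
  obtain i where i: "x = chain_node i 0"
    using x W_sub by (auto simp: encoding_facts_def)
  have "W \<subseteq> chain_facts A i (xs i)"
  proof
    fix f
    assume "f \<in> W"
    moreover obtain j where "f \<in> chain_facts A j (xs j)"
      using \<open>f \<in> W\<close> W_sub by (auto simp: encoding_facts_def)
    ultimately have "(0, [chain_node j 0]) \<in> W"
      using encoded_node_of_chain_fact chain_start_of_encoded_node[OF linked] by blast
    then have "chain_node j 0 = chain_node i 0"
      using unique i by blast
    then have "j = i"
      by simp
    with \<open>f \<in> chain_facts A j (xs j)\<close> show "f \<in> chain_facts A i (xs i)"
      by simp
  qed
  then show "\<exists>i. W = chain_facts A i (xs i)"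
    using chain_facts_subset_of_start[OF linked] x i by blast
next
  assume "\<exists>i. W = chain_facts A i (xs i)"
  then show "valid_encoding A W"
    using narrow valid_encoding_chain_facts by blast
qed

end

end

section \<open>First-order formulas\<close>

abbreviation fo_imp :: "fo \<Rightarrow> fo \<Rightarrow> fo" where
  "fo_imp \<phi> \<psi> \<equiv> Disj (Neg \<phi>) \<psi>"

definition conj_list :: "fo list \<Rightarrow> fo" where
  "conj_list \<phi>s = foldr Conj \<phi>s TT"

definition disj_list :: "fo list \<Rightarrow> fo" where
  "disj_list \<phi>s = foldr Disj \<phi>s FF"

lemma sat_conj_list [simp]: "sat Ad D v (conj_list \<phi>s) \<longleftrightarrow> (\<forall>\<phi>\<in>set \<phi>s. sat Ad D v \<phi>)"
  by (induction \<phi>s) (auto simp: conj_list_def)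

lemma sat_disj_list [simp]: "sat Ad D v (disj_list \<phi>s) \<longleftrightarrow> (\<exists>\<phi>\<in>set \<phi>s. sat Ad D v \<phi>)"
  by (induction \<phi>s) (auto simp: disj_list_def)

lemma fv_conj_list [simp]: "fv (conj_list \<phi>s) = (\<Union>\<phi>\<in>set \<phi>s. fv \<phi>)"
  by (induction \<phi>s) (auto simp: conj_list_def)

lemma fv_disj_list [simp]: "fv (disj_list \<phi>s) = (\<Union>\<phi>\<in>set \<phi>s. fv \<phi>)"
  by (induction \<phi>s) (auto simp: disj_list_def)

lemma fo_consts_conj_list [simp]: "fo_consts (conj_list \<phi>s) = (\<Union>\<phi>\<in>set \<phi>s. fo_consts \<phi>)"
  by (induction \<phi>s) (auto simp: conj_list_def)

lemma fo_consts_disj_list [simp]: "fo_consts (disj_list \<phi>s) = (\<Union>\<phi>\<in>set \<phi>s. fo_consts \<phi>)"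
  by (induction \<phi>s) (auto simp: disj_list_def)

lemma fo_over_conj_list [simp]: "fo_over S ar (conj_list \<phi>s) \<longleftrightarrow> (\<forall>\<phi>\<in>set \<phi>s. fo_over S ar \<phi>)"
  by (induction \<phi>s) (auto simp: conj_list_def)

lemma fo_over_disj_list [simp]: "fo_over S ar (disj_list \<phi>s) \<longleftrightarrow> (\<forall>\<phi>\<in>set \<phi>s. fo_over S ar \<phi>)"
  by (induction \<phi>s) (auto simp: disj_list_def)

lemma fo_over_foldr_Ex [simp]: "fo_over S ar (foldr Ex xs \<phi>) = fo_over S ar \<phi>"
  by (induction xs) auto

lemma fv_foldr_Ex [simp]: "fv (foldr Ex xs \<phi>) = fv \<phi> - set xs"
  by (induction xs) auto

definition upd_block :: "(nat \<Rightarrow> nat) \<Rightarrow> nat \<Rightarrow> nat list \<Rightarrow> nat \<Rightarrow> nat" where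
  "upd_block v a p y = (if a \<le> y \<and> y < a + length p then p ! (y - a) else v y)"

lemma upd_block_Cons: "upd_block (v(a := b)) (Suc a) p = upd_block v a (b # p)"
  by (auto simp: upd_block_def fun_eq_iff nth_Cons' Suc_diff_Suc)

lemma map_upd_block: "length p = n \<Longrightarrow> b = a + n \<Longrightarrow> map (upd_block v a p) [a..<b] = p"
  by (rule nth_equalityI) (auto simp: upd_block_def)

lemma term_val_comp_Var [simp]: "term_val v \<circ> Var = v"
  by (simp add: fun_eq_iff)

lemma sat_Ex_block:
  "sat Ad D v (foldr Ex [a..<a + n] \<phi>) \<longleftrightarrow>
     (\<exists>p. length p = n \<and> set p \<subseteq> Ad \<and> sat Ad D (upd_block v a p) \<phi>)"
proof (induction n arbitrary: a v)
  case 0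
  have "upd_block v a [] = v"
    by (simp add: upd_block_def fun_eq_iff)
  then show ?case
    by simp
next
  case (Suc n)
  have "sat Ad D v (foldr Ex [a..<a + Suc n] \<phi>) \<longleftrightarrow>
      (\<exists>b\<in>Ad. sat Ad D (v(a := b)) (foldr Ex [Suc a..<Suc a + n] \<phi>))"
    by (simp add: upt_conv_Cons del: upt_Suc)
  also have "\<dots> \<longleftrightarrow>
      (\<exists>b\<in>Ad. \<exists>p. length p = n \<and> set p \<subseteq> Ad \<and> sat Ad D (upd_block v a (b # p)) \<phi>)"
    by (simp only: Suc.IH upd_block_Cons)
  also have "\<dots> \<longleftrightarrow> (\<exists>p. length p = Suc n \<and> set p \<subseteq> Ad \<and> sat Ad D (upd_block v a p) \<phi>)"
    by (metis (no_types, lifting) Suc_length_conv insert_subset list.simps(15))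
  finally show ?case .
qed

lemma term_val_upd_block: "term_vars s \<subseteq> {..<a} \<Longrightarrow> term_val (upd_block v a p) s = term_val v s"
  by (cases s) (auto simp: upd_block_def)

lemma set_subset_adom: "(r, as) \<in> W \<Longrightarrow> set as \<subseteq> adom W"
  unfolding adom_def by force

definition edge_fo :: "nat \<Rightarrow> fo_term \<Rightarrow> fo_term \<Rightarrow> fo" where
  "edge_fo A s t = foldr Ex [2..<2 + Suc A] (Atom 2 (s # t # map Var [2..<2 + Suc A]))"

lemma sat_edge_fo:
  assumes "adom W \<subseteq> Ad" "term_vars s \<subseteq> {..<2}" "term_vars t \<subseteq> {..<2}"
  shows "sat Ad W v (edge_fo A s t) \<longleftrightarrow>
    (\<exists>p. length p = Suc A \<and> (2, term_val v s # term_val v t # p) \<in> W)"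
proof -
  have "sat Ad W v (edge_fo A s t) \<longleftrightarrow>
      (\<exists>p. length p = Suc A \<and> set p \<subseteq> Ad \<and> (2, term_val v s # term_val v t # p) \<in> W)"
    unfolding edge_fo_def sat_Ex_block using assms(2,3)
    by (auto simp: term_val_upd_block map_upd_block simp del: upt_Suc)
  moreover have "set p \<subseteq> Ad" if "(2, term_val v s # term_val v t # p) \<in> W" for p
    using set_subset_adom[OF that] assms(1) by auto
  ultimately show ?thesis
    by blast
qed

definition in_edge_fo :: "nat \<Rightarrow> fo" where
  "in_edge_fo A = Ex 1 (edge_fo A (Var 1) (Var 0))"

definition out_edge_fo :: "nat \<Rightarrow> fo" where
  "out_edge_fo A = Ex 1 (edge_fo A (Var 0) (Var 1))"

definition valid_encoding_fo :: "nat \<Rightarrow> fo" where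
  "valid_encoding_fo A = conj_list
     [Ex 0 (Atom 0 [Var 0]),
      All 0 (All 1 (fo_imp (Conj (Atom 0 [Var 0]) (Atom 0 [Var 1])) (Eq (Var 0) (Var 1)))),
      All 0 (fo_imp (disj_list [Atom 0 [Var 0], Atom 1 [Var 0], in_edge_fo A, out_edge_fo A])
                    (Conj (Disj (Atom 0 [Var 0]) (in_edge_fo A)) (Disj (Atom 1 [Var 0]) (out_edge_fo A))))]"

lemma sat_in_edge_fo:
  assumes "adom W \<subseteq> Ad"
  shows "sat Ad W v (in_edge_fo A) \<longleftrightarrow> has_in_edge A W (v 0)"
  using assms sat_edge_fo[OF assms] set_subset_adom[of 2 _ W]
  unfolding in_edge_fo_def has_in_edge_def by fastforce

lemma sat_out_edge_fo:
  assumes "adom W \<subseteq> Ad"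
  shows "sat Ad W v (out_edge_fo A) \<longleftrightarrow> has_out_edge A W (v 0)"
  using assms sat_edge_fo[OF assms] set_subset_adom[of 2 _ W]
  unfolding out_edge_fo_def has_out_edge_def by fastforce

lemma encoded_node_in_adom: "encoded_node A W y \<Longrightarrow> y \<in> adom W"
  unfolding encoded_node_def has_in_edge_def has_out_edge_def
  by (auto dest!: set_subset_adom)

lemma sat_valid_encoding_fo:
  assumes "adom W \<subseteq> Ad"
  shows "sat Ad W v (valid_encoding_fo A) \<longleftrightarrow> valid_encoding A W"
proof -
  have start_in_Ad: "(0, [x]) \<in> W \<Longrightarrow> x \<in> Ad" for x
    using assms set_subset_adom[of 0 "[x]" W] by auto
  have "sat Ad W v (All 0 (fo_imp (disj_list [Atom 0 [Var 0], Atom 1 [Var 0], in_edge_fo A, out_edge_fo A])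
           (Conj (Disj (Atom 0 [Var 0]) (in_edge_fo A)) (Disj (Atom 1 [Var 0]) (out_edge_fo A))))) \<longleftrightarrow>
        (\<forall>y. encoded_node A W y \<longrightarrow> node_linked A W y)"
    using assms encoded_node_in_adom[of A W]
    by (auto simp: sat_in_edge_fo sat_out_edge_fo encoded_node_def node_linked_def)
  then show ?thesis
    unfolding valid_encoding_fo_def valid_encoding_def
    using start_in_Ad by auto
qed

lemma fo_over_valid_encoding_fo: "fo_over {0, 1, 2} (encoding_arity A) (valid_encoding_fo A)"
  by (simp add: valid_encoding_fo_def in_edge_fo_def out_edge_fo_def edge_fo_def encoding_arity_def
      del: upt_Suc)

lemma fv_valid_encoding_fo: "fv (valid_encoding_fo A) = {}"
  by (auto simp: valid_encoding_fo_def in_edge_fo_def out_edge_fo_def edge_fo_def)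

(* The bound variables A and Suc A are fresh because the free variables 0, ..., r - 1 satisfy r \<le> A. *)
definition decode_fo :: "nat \<Rightarrow> nat \<Rightarrow> nat \<Rightarrow> fo" where
  "decode_fo A R r = Ex A (Ex (Suc A)
     (Atom 2 (Var A # Var (Suc A) # Const R # map Var [0..<r] @ replicate (A - r) (Const 0))))"

lemma sat_decode_fo:
  assumes "adom W \<subseteq> Ad" "length bs \<le> A"
  shows "sat Ad W (tuple_assign bs) (decode_fo A R (length bs)) \<longleftrightarrow>
    (\<exists>u w. (2, u # w # padded_fact A (R, bs)) \<in> W)"
proof -
  have "map (term_val ((tuple_assign bs)(A := u, Suc A := w))) (map Var [0..<length bs]) = bs" for u w
    using assms(2) by (intro nth_equalityI) (auto simp: tuple_assign_def)
  then have "sat Ad W (tuple_assign bs) (decode_fo A R (length bs)) \<longleftrightarrow>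
      (\<exists>u\<in>Ad. \<exists>w\<in>Ad. (2, u # w # padded_fact A (R, bs)) \<in> W)"
    by (simp add: decode_fo_def padded_fact_def)
  also have "\<dots> \<longleftrightarrow> (\<exists>u w. (2, u # w # padded_fact A (R, bs)) \<in> W)"
    using assms(1) set_subset_adom[of 2 _ W] by fastforce
  finally show ?thesis .
qed

definition tuple_eq_fo :: "nat list \<Rightarrow> fo" where
  "tuple_eq_fo as = conj_list (map (\<lambda>j. Eq (Var j) (Const (as ! j))) [0..<length as])"

definition facts_fo :: "fact list \<Rightarrow> nat \<Rightarrow> fo" where
  "facts_fo fs R = disj_list [tuple_eq_fo as. (R', as) \<leftarrow> fs, R' = R]"

lemma sat_facts_fo:
  assumes "\<forall>as. (R, as) \<in> set fs \<longrightarrow> length as = length bs"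
  shows "sat Ad W (tuple_assign bs) (facts_fo fs R) \<longleftrightarrow> (R, bs) \<in> set fs"
proof -
  have "sat Ad W (tuple_assign bs) (tuple_eq_fo as) \<longleftrightarrow> as = bs" if "length as = length bs" for as
    using that by (auto simp: tuple_eq_fo_def tuple_assign_def intro: nth_equalityI)
  then show ?thesis
    using assms by (auto simp: facts_fo_def)
qed

lemma fo_consts_facts_fo: "(R, as) \<in> set fs \<Longrightarrow> set as \<subseteq> fo_consts (facts_fo fs R)"
  by (force simp: facts_fo_def tuple_eq_fo_def in_set_conv_nth)

section \<open>The decoding view\<close>

(*
  Worlds that are not valid encodings are sent to the default instance fs, which facts_fo spells
  out with constants because its elements need not occur in the world.
*)
definition encoding_view :: "nat \<Rightarrow> (nat \<Rightarrow> nat) \<Rightarrow> fact list \<Rightarrow> nat \<Rightarrow> fo" where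
  "encoding_view A ar fs R =
     Disj (Conj (valid_encoding_fo A) (decode_fo A R (ar R)))
          (Conj (Neg (valid_encoding_fo A)) (facts_fo fs R))"

lemma mem_apply_view:
  "(R, bs) \<in> apply_view S ar \<Phi> W \<longleftrightarrow>
     R \<in> S \<and> length bs = ar R \<and> set bs \<subseteq> adom W \<union> fo_consts (\<Phi> R) \<and> adom_sat W (\<Phi> R) bs"
  by (simp add: apply_view_def)

lemma sat_encoding_view:
  assumes "adom W \<subseteq> Ad"
  shows "sat Ad W v (encoding_view A ar fs R) \<longleftrightarrow>
    (if valid_encoding A W then sat Ad W v (decode_fo A R (ar R)) else sat Ad W v (facts_fo fs R))"
  by (simp add: encoding_view_def sat_valid_encoding_fo[OF assms])

lemma adom_sat_encoding_view:
  assumes "\<forall>f\<in>set fs. fact_over S ar f" "length bs = ar R" "ar R \<le> A"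
  shows "adom_sat W (encoding_view A ar fs R) bs \<longleftrightarrow>
    (if valid_encoding A W then \<exists>u w. (2, u # w # padded_fact A (R, bs)) \<in> W
     else (R, bs) \<in> set fs)"
proof -
  let ?Ad = "adom W \<union> fo_consts (encoding_view A ar fs R)"
  have Ad: "adom W \<subseteq> ?Ad"
    by blast
  have "sat ?Ad W (tuple_assign bs) (decode_fo A R (ar R)) \<longleftrightarrow>
      (\<exists>u w. (2, u # w # padded_fact A (R, bs)) \<in> W)"
    using sat_decode_fo[OF Ad] assms(2,3) by metis
  moreover have "sat ?Ad W (tuple_assign bs) (facts_fo fs R) \<longleftrightarrow> (R, bs) \<in> set fs"
    using assms(1,2) by (intro sat_facts_fo) (auto simp: fact_over_def)
  ultimately show ?thesis
    unfolding adom_sat_def sat_encoding_view[OF Ad] by simp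
qed

lemma apply_encoding_view:
  assumes "\<forall>R\<in>S. ar R \<le> A" "\<forall>f\<in>set fs. fact_over S ar f"
  shows "apply_view S ar (encoding_view A ar fs) W =
    (if valid_encoding A W then decoded_facts S ar A W else set fs)"
proof (rule set_eqI)
  fix f :: fact
  obtain R bs where f: "f = (R, bs)"
    by fastforce
  show "f \<in> apply_view S ar (encoding_view A ar fs) W \<longleftrightarrow>
      f \<in> (if valid_encoding A W then decoded_facts S ar A W else set fs)"
  proof (cases "R \<in> S \<and> length bs = ar R")
    case False
    then show ?thesis
      using assms(2) by (auto simp: f mem_apply_view decoded_facts_def fact_over_def)
  next
    case True
    have "set bs \<subseteq> adom W" if "(2, u # w # padded_fact A (R, bs)) \<in> W" for u w
      using set_subset_adom[OF that] by (auto simp: padded_fact_def)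
    moreover have "set bs \<subseteq> fo_consts (encoding_view A ar fs R)" if "(R, bs) \<in> set fs"
      using fo_consts_facts_fo[OF that] by (auto simp: encoding_view_def)
    ultimately show ?thesis
      using True assms adom_sat_encoding_view[of fs S ar bs R A W]
      unfolding f mem_apply_view by (auto simp: decoded_facts_def fact_over_def)
  qed
qed

lemma fo_view_encoding_view:
  assumes "\<forall>R\<in>S. ar R \<le> A" "\<forall>f\<in>set fs. fact_over S ar f"
  shows "fo_view {0, 1, 2} (encoding_arity A) S ar (encoding_view A ar fs)"
  unfolding fo_view_def encoding_view_def using assms fo_over_valid_encoding_fo[of A]
  by (auto simp: fv_valid_encoding_fo decode_fo_def facts_fo_def
      tuple_eq_fo_def encoding_arity_def fact_over_def)

lemma apply_encoding_view_chain_facts: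
  assumes "\<forall>R\<in>S. ar R \<le> A" "\<forall>f\<in>set fs. fact_over S ar f" "\<forall>f\<in>set gs. fact_over S ar f"
  shows "apply_view S ar (encoding_view A ar fs) (chain_facts A i gs) = set gs"
proof -
  have "\<forall>f\<in>set gs. length (snd f) \<le> A"
    using assms(1,3) by (auto simp: fact_over_def)
  then show ?thesis
    using apply_encoding_view[OF assms(1,2)] valid_encoding_chain_facts
      decoded_facts_chain_facts[OF assms(3)]
    by simp
qed

lemma image_apply_encoding_view:
  assumes "\<forall>R\<in>S. ar R \<le> A" and over: "\<forall>i. \<forall>f\<in>set (xs i). fact_over S ar f"
  shows "apply_view S ar (encoding_view A ar (xs 0)) ` {W. W \<subseteq> encoding_facts A xs \<and> finite W} =
    range (\<lambda>i. set (xs i))"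
    (is "?view ` ?worlds = _")
proof (intro equalityI subsetI)
  fix D
  assume "D \<in> ?view ` ?worlds"
  then obtain W where W: "W \<subseteq> encoding_facts A xs" and D: "D = ?view W"
    by blast
  have narrow: "\<forall>i. \<forall>f\<in>set (xs i). length (snd f) \<le> A"
    using over assms(1) by (auto simp: fact_over_def)
  show "D \<in> range (\<lambda>i. set (xs i))"
  proof (cases "valid_encoding A W")
    case True
    then obtain i where "W = chain_facts A i (xs i)"
      using valid_encoding_iff_chain_facts[OF W narrow] by blast
    then show ?thesis
      using D apply_encoding_view_chain_facts assms by simp
  next
    case False
    then show ?thesis
      using D apply_encoding_view assms by simp
  qed
next
  fix D
  assume "D \<in> range (\<lambda>i. set (xs i))"
  then obtain i where "D = ?view (chain_facts A i (xs i))"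
    using apply_encoding_view_chain_facts assms by auto
  moreover have "chain_facts A i (xs i) \<in> ?worlds"
    by (auto simp: encoding_facts_def chain_facts_def)
  ultimately show "D \<in> ?view ` ?worlds"
    by blast
qed

lemma ex_TI_PDB_encoding_facts:
  assumes "\<forall>i. \<forall>f\<in>set (xs i). length (snd f) \<le> A"
  shows "\<exists>I. TI_PDB {0, 1, 2} (encoding_arity A) I \<and>
    set_pmf I = {W. W \<subseteq> encoding_facts A xs \<and> finite W}"
proof -
  obtain I where "tuple_independent I" and I: "set_pmf I = {W. W \<subseteq> encoding_facts A xs \<and> finite W}"
    using ex_tuple_independent_finite_subsets[OF countable_encoding_facts infinite_encoding_facts]
    by blast
  moreover have "PDB {0, 1, 2} (encoding_arity A) I"
    using fact_over_encoding_facts[OF assms] by (auto simp: PDB_def is_instance_def I)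
  ultimately show ?thesis
    unfolding TI_PDB_def by blast
qed

lemma ex_in_FO_TI_worlds_range:
  fixes xs :: "nat \<Rightarrow> fact list"
  assumes "\<forall>R\<in>S. ar R \<le> A" and "\<forall>i. \<forall>f\<in>set (xs i). fact_over S ar f"
  shows "\<exists>\<D>. in_FO_TI S ar \<D> \<and> worlds \<D> = range (\<lambda>i. set (xs i))"
proof -
  have "\<forall>i. \<forall>f\<in>set (xs i). length (snd f) \<le> A"
    using assms by (auto simp: fact_over_def)
  then obtain I where "TI_PDB {0, 1, 2} (encoding_arity A) I"
    and I: "set_pmf I = {W. W \<subseteq> encoding_facts A xs \<and> finite W}"
    using ex_TI_PDB_encoding_facts by blast
  moreover have "schema {0, 1, 2}"
    by (simp add: schema_def)
  moreover have "fo_view {0, 1, 2} (encoding_arity A) S ar (encoding_view A ar (xs 0))"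
    using assms by (intro fo_view_encoding_view) auto
  ultimately have "in_FO_TI S ar (map_pmf (apply_view S ar (encoding_view A ar (xs 0))) I)"
    unfolding in_FO_TI_def by blast
  moreover have "worlds (map_pmf (apply_view S ar (encoding_view A ar (xs 0))) I) = range (\<lambda>i. set (xs i))"
    using image_apply_encoding_view[OF assms] by (simp add: worlds_def I)
  ultimately show ?thesis
    by blast
qed

lemma countable_finite_sets_eq_range_set:
  assumes "countable DD" "DD \<noteq> {}" "\<forall>D\<in>DD. finite D"
  shows "\<exists>xs. DD = range (\<lambda>i::nat. set (xs i))"
proof
  let ?xs = "\<lambda>i. SOME l. set l = from_nat_into DD i"
  have "set (?xs i) = from_nat_into DD i" for i
    using assms from_nat_into finite_list by (metis (mono_tags, lifting) someI_ex)
  then show "DD = range (\<lambda>i. set (?xs i))"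
    using range_from_nat_into[OF assms(2,1)] by simp
qed

theorem lemma6p6:
  fixes S :: "nat set" and ar :: "nat \<Rightarrow> nat" and DD :: "fact set set"
  assumes "schema S"
    and "DD \<noteq> {}"
    and "\<forall>D\<in>DD. is_instance S ar D"
  shows "\<exists>\<D>. in_FO_TI S ar \<D> \<and> worlds \<D> = DD"
proof -
  have bound: "\<forall>R\<in>S. ar R \<le> Max (ar ` S)"
    using assms(1) by (simp add: schema_def)
  have finite: "\<forall>D\<in>DD. finite D"
    using assms(3) by (simp add: is_instance_def)
  then have "countable DD"
    by (intro countable_subset[OF _ countable_Collect_finite]) auto
  then obtain xs :: "nat \<Rightarrow> fact list" where DD: "DD = range (\<lambda>i. set (xs i))"
    using countable_finite_sets_eq_range_set assms(2) finite by blast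
  have "\<forall>i. \<forall>f\<in>set (xs i). fact_over S ar f"
    using assms(3) by (auto simp: DD is_instance_def)
  with bound show ?thesis
    unfolding DD by (rule ex_in_FO_TI_worlds_range)
qed

end
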